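(* Let $A\in\mathbb{R}^{n\times n}$ be such that $A-I$ is an irreducible singular $M$-matrix, let $v>0$ satisfy $(A^T-I)v=0$, and let $b\in\mathbb{R}^n$ satisfy $v^Tb=0$. Then the equation $Ax-|x|=b$ has infinitely many solutions.
   Context: $|x|$ is the componentwise absolute value. A $Z$-matrix is a real square matrix whose off-diagonal entries are all nonpositive; any $Z$-matrix can be written $sI-B$ with $B\ge 0$ entrywise, and it is a singular $M$-matrix if $s=\rho(B)$, where $\rho$ is spectral radius. A square matrix $M$ is reducible if there is a permutation matrix $P$ with $P^TMP=\begin{bmatrix}M_{11}&M_{12}\\0&M_{22}\end{bmatrix}$ where $M_{11},M_{22}$ are square (nonempty) blocks; it is irreducible otherwise. $v>0$ means all components of $v$ are positive. *)

theory Defs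
  imports "Jordan_Normal_Form.Spectral_Radius"
begin

definition Z_matrix :: "nat \<Rightarrow> real mat \<Rightarrow> bool" where
  "Z_matrix n M \<longleftrightarrow> M \<in> carrier_mat n n \<and>
     (\<forall>i<n. \<forall>j<n. i \<noteq> j \<longrightarrow> M $$ (i,j) \<le> 0)"

definition singular_M_matrix :: "nat \<Rightarrow> real mat \<Rightarrow> bool" where
  "singular_M_matrix n M \<longleftrightarrow> Z_matrix n M \<and>
     (\<exists>s B. B \<in> carrier_mat n n \<and> (\<forall>i<n. \<forall>j<n. 0 \<le> B $$ (i,j)) \<and>
        M = s \<cdot>\<^sub>m 1\<^sub>m n - B \<and> s = spectral_radius (map_mat complex_of_real B))"

definition perm_matrix :: "nat \<Rightarrow> real mat \<Rightarrow> bool" where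
  "perm_matrix n P \<longleftrightarrow> (\<exists>p. p permutes {..<n} \<and>
     P = mat n n (\<lambda>(i,j). if p i = j then 1 else 0))"

definition reducible_matrix :: "nat \<Rightarrow> real mat \<Rightarrow> bool" where
  "reducible_matrix n M \<longleftrightarrow> (\<exists>P k. perm_matrix n P \<and> 0 < k \<and> k < n \<and>
     (\<forall>i j. k \<le> i \<longrightarrow> i < n \<longrightarrow> j < k \<longrightarrow> (transpose_mat P * M * P) $$ (i,j) = 0))"

definition irreducible_matrix :: "nat \<Rightarrow> real mat \<Rightarrow> bool" where
  "irreducible_matrix n M \<longleftrightarrow> \<not> reducible_matrix n M"

end

theory Submission
  imports Defs
begin

text \<open>Write \<open>M = A - I\<close>. On \<open>x \<ge> 0\<close> the equation \<open>Ax - |x| = b\<close> reads \<open>Mx = b\<close>, so a solution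
\<open>x\<^sub>0\<close> of \<open>Mx = b\<close> together with a positive null vector \<open>w\<close> of \<open>M\<close> gives the nonnegative solutions
\<open>x\<^sub>0 + t w\<close> for all large \<open>t\<close>.
Since \<open>v > 0\<close> and \<open>v\<^sup>T M = 0\<close>, \<open>Mx \<le> 0\<close> forces \<open>Mx = 0\<close>. For a null vector \<open>y\<close> the Z-pattern gives
\<open>M|y| \<le> 0\<close>, so \<open>|y|\<close> is a nonnegative null vector, and irreducibility makes it positive unless
\<open>y = 0\<close>. Hence replacing row \<open>k\<close> of \<open>M\<close> by the unit row \<open>e\<^sub>k\<^sup>T\<close> yields an invertible matrix, which
solves \<open>Mx = c\<close> for every \<open>c \<bottom> v\<close> with \<open>x\<^sub>k\<close> prescribed.\<close>

lemma mult_mat_vec_index_sum: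
  "M \<in> carrier_mat n n \<Longrightarrow> x \<in> carrier_vec n \<Longrightarrow> i < n \<Longrightarrow>
   (M *\<^sub>v x) $ i = (\<Sum>j<n. M $$ (i,j) * x $ j)"
  by (simp add: scalar_prod_def lessThan_atLeast0 row_def)

lemma exists_permutes_separating:
  assumes Z: "Z \<subseteq> {..<n}"
  obtains f where "f permutes {..<n}"
    and "\<And>i. i < n \<Longrightarrow> f i \<in> Z \<longleftrightarrow> card ({..<n} - Z) \<le> i"
proof -
  define N where "N = {..<n} - Z"
  define k where "k = card N"
  have fin: "finite N" "finite Z" using Z finite_subset by (auto simp: N_def)
  have NZ: "N \<union> Z = {..<n}" "N \<inter> Z = {}" using Z by (auto simp: N_def)
  have card: "k + card Z = n"
    unfolding k_def using card_Un_disjoint[OF fin NZ(2)] NZ(1) by simp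
  obtain g where g: "bij_betw g {0..<k} N" using ex_bij_betw_nat_finite[OF fin(1)] k_def by auto
  obtain h where h: "bij_betw h {0..<card Z} Z" using ex_bij_betw_nat_finite[OF fin(2)] by auto
  define f where "f i = (if i < k then g i else if i < n then h (i - k) else i)" for i
  have shift: "bij_betw (\<lambda>i. i - k) {k..<n} {0..<card Z}"
    by (rule bij_betw_byWitness[where f' = "\<lambda>i. i + k"]) (use card in auto)
  have low: "bij_betw f {0..<k} N"
    using g by (rule bij_betw_cong[THEN iffD1, rotated]) (auto simp: f_def)
  have high: "bij_betw f {k..<n} Z"
    using bij_betw_trans[OF shift h] by (rule bij_betw_cong[THEN iffD1, rotated]) (auto simp: f_def)
  have "bij_betw f ({0..<k} \<union> {k..<n}) (N \<union> Z)" by (rule bij_betw_combine[OF low high NZ(2)])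
  moreover have "{0..<k} \<union> {k..<n} = {..<n}" using card by auto
  ultimately have "bij_betw f {..<n} {..<n}" using NZ(1) by simp
  then have "f permutes {..<n}" by (rule bij_imp_permutes) (use card in \<open>simp add: f_def\<close>)
  moreover have "f i \<in> Z \<longleftrightarrow> k \<le> i" if "i < n" for i
  proof (cases "k \<le> i")
    case True
    then show ?thesis using bij_betw_apply[OF high] that by simp
  next
    case False
    then have "f i \<in> N" using bij_betw_apply[OF low] by simp
    then show ?thesis using False NZ(2) by blast
  qed
  ultimately show ?thesis using that unfolding k_def N_def by blast
qed

(* inv_into UNIV is spelled out because HOL-Algebra's group syntax takes over inv *)
lemma perm_matrix_conj_index:
  fixes M :: "real mat"
  assumes p: "p permutes {..<n}" and P: "P = mat n n (\<lambda>(i,j). if p i = j then 1 else 0)"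
    and M: "M \<in> carrier_mat n n" and i: "i < n" and j: "j < n"
  shows "(transpose_mat P * M * P) $$ (i,j) = M $$ (inv_into UNIV p i, inv_into UNIV p j)"
proof -
  have peq: "p a = i \<longleftrightarrow> a = inv_into UNIV p i" for a i using permutes_inv_eq[OF p] by metis
  have inv_lt: "inv_into UNIV p i < n" if "i < n" for i
    using permutes_in_image[OF permutes_inv[OF p]] that by simp
  have delta: "(if c then 1 else 0) * x = (if c then x else 0)"
    "x * (if c then 1 else 0) = (if c then x else 0)" for c and x :: real by simp_all
  have "(transpose_mat P * M * P) $$ (i,j)
      = (\<Sum>b<n. (\<Sum>a<n. (if a = inv_into UNIV p i then 1 else 0) * M $$ (a,b))
           * (if b = inv_into UNIV p j then 1 else 0))"
    using i j M by (simp add: P scalar_prod_def peq lessThan_atLeast0)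
  also have "\<dots> = M $$ (inv_into UNIV p i, inv_into UNIV p j)"
    using inv_lt i j by (simp add: delta)
  finally show ?thesis .
qed

lemma reducible_matrixI:
  fixes M :: "real mat"
  assumes M: "M \<in> carrier_mat n n"
    and Z: "Z \<subseteq> {..<n}" "Z \<noteq> {}" "Z \<noteq> {..<n}"
    and closed: "\<And>i j. i \<in> Z \<Longrightarrow> j < n \<Longrightarrow> j \<notin> Z \<Longrightarrow> M $$ (i,j) = 0"
  shows "reducible_matrix n M"
proof -
  obtain f where f: "f permutes {..<n}"
    and sep: "\<And>i. i < n \<Longrightarrow> f i \<in> Z \<longleftrightarrow> card ({..<n} - Z) \<le> i"
    using exists_permutes_separating[OF Z(1)] by blast
  define k where "k = card ({..<n} - Z)"
  define P :: "real mat" where "P = mat n n (\<lambda>(i,j). if inv_into UNIV f i = j then 1 else 0)"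
  have inv_f: "inv_into UNIV f permutes {..<n}" "inv_into UNIV (inv_into UNIV f) = f"
    using f by (auto simp: permutes_inv inv_inv_eq permutes_bij)
  have "0 < k" using Z(1,3) by (auto simp: k_def card_gt_0_iff)
  moreover have "k < n"
  proof -
    have "k = n - card Z" using Z(1) by (simp add: k_def card_Diff_subset finite_subset)
    moreover have "0 < card Z" using Z(1,2) by (simp add: card_gt_0_iff finite_subset)
    ultimately show ?thesis using Z(1) by (metis card_lessThan card_mono diff_less finite_lessThan less_le_trans)
  qed
  moreover have "(transpose_mat P * M * P) $$ (i,j) = 0" if "k \<le> i" "i < n" "j < k" for i j
  proof -
    have "j < n" using that \<open>k < n\<close> by simp
    then have "f i \<in> Z" "f j \<notin> Z" "f j < n"
      using that sep[of i] sep[of j] permutes_in_image[OF f] by (auto simp: k_def)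
    then show ?thesis
      using perm_matrix_conj_index[OF inv_f(1) P_def M \<open>i < n\<close> \<open>j < n\<close>] closed
      by (simp add: inv_f(2))
  qed
  ultimately show ?thesis
    unfolding reducible_matrix_def perm_matrix_def using inv_f(1) P_def by blast
qed

definition replace_row_by_unit :: "nat \<Rightarrow> nat \<Rightarrow> 'a :: semiring_1 mat \<Rightarrow> 'a mat" where
  "replace_row_by_unit n k M =
     mat n n (\<lambda>(i,j). if i = k then (if j = k then 1 else 0) else M $$ (i,j))"

lemma replace_row_by_unit_mult_vec:
  fixes M :: "'a :: semiring_1 mat"
  assumes M: "M \<in> carrier_mat n n" and x: "x \<in> carrier_vec n" and i: "i < n" and k: "k < n"
  shows "(replace_row_by_unit n k M *\<^sub>v x) $ i = (if i = k then x $ k else (M *\<^sub>v x) $ i)"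
proof -
  have delta: "(if c then 1 else 0) * a = (if c then a else 0)" for c and a :: 'a by simp
  show ?thesis
    using i k M x by (simp add: replace_row_by_unit_def scalar_prod_def row_def delta)
qed

lemma mult_mat_vec_surj_if_kernel_trivial:
  fixes K :: "'a :: field mat"
  assumes K: "K \<in> carrier_mat n n"
    and kernel: "\<And>y. y \<in> carrier_vec n \<Longrightarrow> K *\<^sub>v y = 0\<^sub>v n \<Longrightarrow> y = 0\<^sub>v n"
    and c: "c \<in> carrier_vec n"
  obtains x where "x \<in> carrier_vec n" "K *\<^sub>v x = c"
proof -
  have "det K \<noteq> 0" using det_0_iff_vec_prod_zero[OF K] kernel by blast
  from det_non_zero_imp_unit[OF K this, of undefined]
  obtain Q where Q: "Q \<in> carrier_mat n n" "K * Q = 1\<^sub>m n"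
    unfolding Units_def ring_mat_def by auto
  have "K *\<^sub>v (Q *\<^sub>v c) = (K * Q) *\<^sub>v c" using assoc_mult_mat_vec[OF K Q(1) c] by simp
  also have "\<dots> = c" using Q c by simp
  finally show ?thesis using Q c by (intro that[of "Q *\<^sub>v c"]) auto
qed

locale Z_matrix_with_positive_left_null_vector =
  fixes n :: nat and M :: "real mat" and v :: "real vec"
  assumes Z_matrix: "Z_matrix n M"
    and v_carrier: "v \<in> carrier_vec n"
    and v_pos: "\<And>i. i < n \<Longrightarrow> 0 < v $ i"
    and left_null: "transpose_mat M *\<^sub>v v = 0\<^sub>v n"
begin

lemma carrier: "M \<in> carrier_mat n n"
  using Z_matrix by (simp add: Z_matrix_def)

lemma offdiag_nonpos: "i < n \<Longrightarrow> j < n \<Longrightarrow> i \<noteq> j \<Longrightarrow> M $$ (i,j) \<le> 0"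
  using Z_matrix by (simp add: Z_matrix_def)

lemma orthogonal_range: "x \<in> carrier_vec n \<Longrightarrow> v \<bullet> (M *\<^sub>v x) = 0"
  using transpose_vec_mult_scalar[OF carrier _ v_carrier] left_null by simp

lemma orthogonal_range_sum: "x \<in> carrier_vec n \<Longrightarrow> (\<Sum>i<n. v $ i * (M *\<^sub>v x) $ i) = 0"
  using orthogonal_range carrier by (simp add: scalar_prod_def lessThan_atLeast0)

lemma diag_nonneg:
  assumes j: "j < n" shows "0 \<le> M $$ (j,j)"
proof -
  have "(M *\<^sub>v unit_vec n j) $ i = M $$ (i,j)" if "i < n" for i
    using that j carrier by simp
  then have "0 = (\<Sum>i<n. v $ i * M $$ (i,j))"
    using orthogonal_range_sum[of "unit_vec n j"] by simp
  also have "\<dots> = v $ j * M $$ (j,j) + (\<Sum>i\<in>{..<n}-{j}. v $ i * M $$ (i,j))"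
    using j by (simp add: sum.remove)
  also have "\<dots> \<le> v $ j * M $$ (j,j)"
    unfolding add_le_same_cancel1
  proof (rule sum_nonpos)
    fix i assume "i \<in> {..<n} - {j}"
    then show "v $ i * M $$ (i,j) \<le> 0"
      using offdiag_nonpos[of i j] v_pos[of i] j by (simp add: mult_nonneg_nonpos)
  qed
  finally have "0 \<le> v $ j * M $$ (j,j)" .
  then show ?thesis using v_pos[OF j] by (simp add: zero_le_mult_iff)
qed

lemma nonpos_image_eq_zero:
  assumes x: "x \<in> carrier_vec n" and nonpos: "\<And>i. i < n \<Longrightarrow> (M *\<^sub>v x) $ i \<le> 0"
  shows "M *\<^sub>v x = 0\<^sub>v n"
proof -
  have terms_nonneg: "0 \<le> - (v $ i * (M *\<^sub>v x) $ i)" if "i \<in> {..<n}" for i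
    using nonpos v_pos that by (simp add: mult_nonneg_nonpos less_imp_le)
  have "(\<Sum>i<n. - (v $ i * (M *\<^sub>v x) $ i)) = 0"
    using orthogonal_range_sum[OF x] by (simp add: sum_negf)
  then have "\<forall>i\<in>{..<n}. - (v $ i * (M *\<^sub>v x) $ i) = 0"
    using sum_nonneg_eq_0_iff[of "{..<n}" "\<lambda>i. - (v $ i * (M *\<^sub>v x) $ i)"] terms_nonneg
    by blast
  then show ?thesis using v_pos carrier by (intro eq_vecI) force+
qed

lemma abs_image_nonpos:
  assumes y: "y \<in> carrier_vec n" and i: "i < n"
    and zero: "(M *\<^sub>v y) $ i = 0 \<or> y $ i = 0"
  shows "(M *\<^sub>v map_vec abs y) $ i \<le> 0"
proof -
  let ?off = "\<lambda>g. \<Sum>j\<in>{..<n}-{i}. M $$ (i,j) * g j"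
  have split: "(M *\<^sub>v x) $ i = M $$ (i,i) * x $ i + ?off (\<lambda>j. x $ j)"
    if "x \<in> carrier_vec n" for x
    using mult_mat_vec_index_sum[OF carrier that i] i by (simp add: sum.remove)
  have off_abs: "?off (\<lambda>j. \<bar>y $ j\<bar>) = - (\<Sum>j\<in>{..<n}-{i}. \<bar>M $$ (i,j) * y $ j\<bar>)"
    unfolding sum_negf[symmetric] using offdiag_nonpos i
    by (intro sum.cong) (auto simp: abs_mult)
  have image_abs: "(M *\<^sub>v map_vec abs y) $ i = M $$ (i,i) * \<bar>y $ i\<bar> + ?off (\<lambda>j. \<bar>y $ j\<bar>)"
    using split[of "map_vec abs y"] y i by simp
  from zero show ?thesis
  proof
    assume "(M *\<^sub>v y) $ i = 0"
    then have "\<bar>M $$ (i,i) * y $ i\<bar> = \<bar>?off (\<lambda>j. y $ j)\<bar>"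
      using split[OF y] by (simp add: eq_neg_iff_add_eq_0[symmetric])
    also have "\<dots> \<le> (\<Sum>j\<in>{..<n}-{i}. \<bar>M $$ (i,j) * y $ j\<bar>)" by (rule sum_abs)
    finally show ?thesis
      using image_abs off_abs diag_nonneg[OF i] by (simp add: abs_mult)
  next
    assume "y $ i = 0"
    then show ?thesis using image_abs off_abs by (simp add: sum_nonneg)
  qed
qed

end

locale irreducible_Z_matrix_with_positive_left_null_vector =
  Z_matrix_with_positive_left_null_vector +
  assumes irreducible: "irreducible_matrix n M"
begin

lemma nonneg_null_vector_pos:
  assumes w: "w \<in> carrier_vec n" and nonneg: "\<And>i. i < n \<Longrightarrow> 0 \<le> w $ i"
    and null: "M *\<^sub>v w = 0\<^sub>v n" and nonzero: "w \<noteq> 0\<^sub>v n" and i: "i < n"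
  shows "0 < w $ i"
proof (rule ccontr)
  define Z where "Z = {i. i < n \<and> w $ i = 0}"
  assume "\<not> 0 < w $ i"
  then have "i \<in> Z" using nonneg[OF i] i by (simp add: Z_def)
  have "\<exists>j<n. w $ j \<noteq> 0"
  proof (rule ccontr)
    assume "\<not> (\<exists>j<n. w $ j \<noteq> 0)"
    then have "w = 0\<^sub>v n" using w by (intro eq_vecI) auto
    with nonzero show False ..
  qed
  then have "Z \<noteq> {..<n}" by (auto simp: Z_def)
  moreover have "Z \<subseteq> {..<n}" "Z \<noteq> {}" using \<open>i \<in> Z\<close> by (auto simp: Z_def)
  moreover have "M $$ (i,j) = 0" if i: "i \<in> Z" and j: "j < n" "j \<notin> Z" for i j
  proof -
    have i_n: "i < n" and wi: "w $ i = 0" using i by (auto simp: Z_def)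
    have wj: "0 < w $ j" using j nonneg[of j] by (simp add: Z_def less_eq_real_def)
    have term_nonneg: "0 \<le> - (M $$ (i,k) * w $ k)" if "k \<in> {..<n}-{i}" for k
      using that offdiag_nonpos[of i k] nonneg[of k] i_n by (simp add: mult_nonpos_nonneg)
    have "0 = (M *\<^sub>v w) $ i" using null i_n by simp
    also have "\<dots> = (\<Sum>k\<in>{..<n}-{i}. M $$ (i,k) * w $ k)"
      using mult_mat_vec_index_sum[OF carrier w i_n] i_n wi by (simp add: sum.remove)
    finally have "(\<Sum>k\<in>{..<n}-{i}. - (M $$ (i,k) * w $ k)) = 0" by (simp add: sum_negf)
    then have "\<forall>k\<in>{..<n}-{i}. - (M $$ (i,k) * w $ k) = 0"
      using sum_nonneg_eq_0_iff[of "{..<n}-{i}" "\<lambda>k. - (M $$ (i,k) * w $ k)"] term_nonneg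
      by blast
    moreover have "j \<in> {..<n}-{i}" using i j by auto
    ultimately show ?thesis using wj by force
  qed
  ultimately have "reducible_matrix n M" by (intro reducible_matrixI[OF carrier]) auto
  then show False using irreducible by (simp add: irreducible_matrix_def)
qed

lemma null_vector_eq_zero_if_entry_zero:
  assumes y: "y \<in> carrier_vec n" and k: "k < n" and yk: "y $ k = 0"
    and null_off_k: "\<And>i. i < n \<Longrightarrow> i \<noteq> k \<Longrightarrow> (M *\<^sub>v y) $ i = 0"
  shows "y = 0\<^sub>v n"
proof (rule ccontr)
  let ?z = "map_vec abs y"
  assume "y \<noteq> 0\<^sub>v n"
  then have "?z \<noteq> 0\<^sub>v n" using y by (auto simp: vec_eq_iff)
  moreover have "(M *\<^sub>v ?z) $ i \<le> 0" if "i < n" for i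
    using abs_image_nonpos[OF y that] null_off_k[OF that] yk by (cases "i = k") auto
  then have "M *\<^sub>v ?z = 0\<^sub>v n" using y by (intro nonpos_image_eq_zero) auto
  ultimately have "0 < ?z $ k" using y k by (intro nonneg_null_vector_pos) auto
  then show False using y k yk by simp
qed

lemma exists_solution_with_entry:
  assumes k: "k < n" and c: "c \<in> carrier_vec n" and orth: "v \<bullet> c = 0"
  obtains x where "x \<in> carrier_vec n" "M *\<^sub>v x = c" "x $ k = a"
proof -
  let ?K = "replace_row_by_unit n k M"
  have K: "?K \<in> carrier_mat n n" by (simp add: replace_row_by_unit_def)
  have K_index: "(?K *\<^sub>v y) $ i = (if i = k then y $ k else (M *\<^sub>v y) $ i)"
    if "y \<in> carrier_vec n" "i < n" for y i
    using replace_row_by_unit_mult_vec[OF carrier that k] .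
  have "y = 0\<^sub>v n" if y: "y \<in> carrier_vec n" and Ky: "?K *\<^sub>v y = 0\<^sub>v n" for y
  proof (rule null_vector_eq_zero_if_entry_zero[OF y k])
    show "y $ k = 0" using K_index[OF y k] Ky k by simp
    show "(M *\<^sub>v y) $ i = 0" if "i < n" "i \<noteq> k" for i
      using K_index[OF y that(1)] Ky that by simp
  qed
  then obtain x where x: "x \<in> carrier_vec n"
    and Kx: "?K *\<^sub>v x = vec n (\<lambda>i. if i = k then a else c $ i)"
    by (rule mult_mat_vec_surj_if_kernel_trivial[OF K]) auto
  have xk: "x $ k = a" using K_index[OF x k] Kx k by simp
  have off_k: "(M *\<^sub>v x) $ i = c $ i" if "i < n" "i \<noteq> k" for i
    using K_index[OF x that(1)] Kx that by simp
  \<comment> \<open>row \<open>k\<close> of \<open>Mx = c\<close> is forced by orthogonality to \<open>v\<close>\<close>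
  have "0 = (\<Sum>i<n. v $ i * ((M *\<^sub>v x) $ i - c $ i))"
    using orthogonal_range_sum[OF x] orth c
    by (simp add: right_diff_distrib sum_subtractf scalar_prod_def lessThan_atLeast0)
  also have "\<dots> = v $ k * ((M *\<^sub>v x) $ k - c $ k)"
    using off_k k by (simp add: sum.remove)
  finally have "(M *\<^sub>v x) $ k = c $ k" using v_pos[OF k] by simp
  then have "(M *\<^sub>v x) $ i = c $ i" if "i < n" for i
    using off_k[OF that] by (cases "i = k") auto
  then have "M *\<^sub>v x = c" using carrier x c by (intro eq_vecI) auto
  with x xk show ?thesis by (intro that)
qed

lemma positive_null_vector:
  assumes n: "0 < n"
  obtains w where "w \<in> carrier_vec n" "M *\<^sub>v w = 0\<^sub>v n" "\<And>i. i < n \<Longrightarrow> 0 < w $ i"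
proof -
  obtain u where u: "u \<in> carrier_vec n" "M *\<^sub>v u = 0\<^sub>v n" "u $ 0 = 1"
    using exists_solution_with_entry[OF n, of "0\<^sub>v n" 1] v_carrier by auto
  define w where "w = map_vec abs u"
  have w: "w \<in> carrier_vec n" using u by (simp add: w_def)
  have null: "M *\<^sub>v w = 0\<^sub>v n"
    unfolding w_def using u abs_image_nonpos by (intro nonpos_image_eq_zero) auto
  have nonneg: "0 \<le> w $ i" if "i < n" for i using u that by (simp add: w_def)
  have "w \<noteq> 0\<^sub>v n" using u n by (auto simp: w_def dest: arg_cong[where f = "\<lambda>x. x $ 0"])
  then show ?thesis using w null nonneg_null_vector_pos[OF w nonneg null] by (intro that)
qed

lemma infinite_nonneg_solutions:
  assumes n: "0 < n" and c: "c \<in> carrier_vec n" and orth: "v \<bullet> c = 0"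
  shows "infinite {x \<in> carrier_vec n. M *\<^sub>v x = c \<and> (\<forall>i<n. 0 \<le> x $ i)}"
proof -
  obtain x0 where x0: "x0 \<in> carrier_vec n" "M *\<^sub>v x0 = c"
    using exists_solution_with_entry[OF n c orth] by metis
  obtain w where w: "w \<in> carrier_vec n" "M *\<^sub>v w = 0\<^sub>v n" "\<And>i. i < n \<Longrightarrow> 0 < w $ i"
    using positive_null_vector[OF n] by metis
  define T where "T = (\<Sum>i<n. \<bar>x0 $ i\<bar> / w $ i)"
  define X where "X t = x0 + t \<cdot>\<^sub>v w" for t
  have X_index: "X t $ i = x0 $ i + t * w $ i" if "i < n" for t i
    using x0 w that by (simp add: X_def)
  have "X ` {T..} \<subseteq> {x \<in> carrier_vec n. M *\<^sub>v x = c \<and> (\<forall>i<n. 0 \<le> x $ i)}"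
  proof (intro image_subsetI)
    fix t assume "t \<in> {T..}"
    then have t: "T \<le> t" by simp
    have "0 \<le> X t $ i" if i: "i < n" for i
    proof -
      have "\<bar>x0 $ i\<bar> / w $ i \<le> T"
        unfolding T_def using i w(3) by (intro member_le_sum) (auto intro: divide_nonneg_pos)
      then have "\<bar>x0 $ i\<bar> / w $ i \<le> t" using t by linarith
      then have "\<bar>x0 $ i\<bar> \<le> t * w $ i" using w(3)[OF i] by (simp add: pos_divide_le_eq)
      then show ?thesis using X_index[OF i, of t] by linarith
    qed
    moreover have "t \<cdot>\<^sub>v 0\<^sub>v n = (0\<^sub>v n :: real vec)" by (intro eq_vecI) auto
    then have "M *\<^sub>v X t = c"
      using x0 w c carrier by (simp add: X_def mult_add_distrib_mat_vec mult_mat_vec)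
    ultimately show "X t \<in> {x \<in> carrier_vec n. M *\<^sub>v x = c \<and> (\<forall>i<n. 0 \<le> x $ i)}"
      using x0 w by (simp add: X_def)
  qed
  moreover have "infinite (X ` {T..})"
  proof -
    have "inj_on X {T..}"
    proof (rule inj_onI)
      fix s t assume "X s = X t"
      then have "s * w $ 0 = t * w $ 0" using X_index[of 0] n by (metis add_left_cancel)
      then show "s = t" using w(3)[OF n] by simp
    qed
    then show ?thesis using infinite_Ici[of T] by (simp add: finite_image_iff)
  qed
  ultimately show ?thesis by (rule infinite_super)
qed

end

theorem proposition4p3:
  fixes A :: "real mat" and v b :: "real vec" and n :: nat
  assumes n: "0 < n"
    and A: "A \<in> carrier_mat n n"
    and M: "singular_M_matrix n (A - 1\<^sub>m n)"
    and irr: "irreducible_matrix n (A - 1\<^sub>m n)"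
    and v: "v \<in> carrier_vec n" and vpos: "\<forall>i<n. 0 < v $ i"
    and vker: "(transpose_mat A - 1\<^sub>m n) *\<^sub>v v = 0\<^sub>v n"
    and b: "b \<in> carrier_vec n" and vb: "v \<bullet> b = 0"
  shows "infinite {x \<in> carrier_vec n. A *\<^sub>v x - map_vec abs x = b}"
proof -
  interpret irreducible_Z_matrix_with_positive_left_null_vector n "A - 1\<^sub>m n" v
  proof
    show "Z_matrix n (A - 1\<^sub>m n)" using M by (simp add: singular_M_matrix_def)
    show "transpose_mat (A - 1\<^sub>m n) *\<^sub>v v = 0\<^sub>v n"
      using vker A by (simp add: transpose_minus)
  qed (use v vpos irr in auto)
  have "A *\<^sub>v x - map_vec abs x = b"
    if x: "x \<in> carrier_vec n" and sol: "(A - 1\<^sub>m n) *\<^sub>v x = b" and nonneg: "\<forall>i<n. 0 \<le> x $ i" for x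
  proof -
    have "map_vec abs x = x" using x nonneg by (intro eq_vecI) auto
    then show ?thesis using sol A x by (simp add: minus_mult_distrib_mat_vec)
  qed
  then have "{x \<in> carrier_vec n. (A - 1\<^sub>m n) *\<^sub>v x = b \<and> (\<forall>i<n. 0 \<le> x $ i)}
      \<subseteq> {x \<in> carrier_vec n. A *\<^sub>v x - map_vec abs x = b}" by blast
  then show ?thesis using infinite_nonneg_solutions[OF n b vb] by (rule infinite_super)
qed

end
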